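(* Let $\mathbf v=(v_1,\dots,v_m)$ and $\mathbf k=(k_1,\dots,k_m)$ be $m$-tuples of positive integers with $k_i\le v_i$ for all $i$ and $\sum_i k_i\ge 2$. Then \[ C(\mathbf v,\mathbf k,2)\ \ge\ \max_{\substack{1\le i\le m\\ k_i\neq 1}} C(v_i,k_i,2). \]
   Context: Let $X_1,\dots,X_m$ be pairwise disjoint sets with $|X_i|=v_i$. A block is an $m$-tuple $(B_1,\dots,B_m)$ with $B_i\subseteq X_i$, $|B_i|=k_i$. An $m$-tuple of sets $(T_1,\dots,T_m)$ is $(\mathbf v,\mathbf k,2)$-admissible if $T_i\subseteq X_i$, $|T_i|\le k_i$ and $\sum|T_i|=2$; it is contained in a block if $T_i\subseteq B_i$ for all $i$. A ${\rm GC}(\mathbf v,\mathbf k,2)$ is a finite family (repetitions allowed) of blocks containing every admissible tuple in at least one block; $C(\mathbf v,\mathbf k,2)$ is the minimum number of blocks. For integers $v\ge k\ge 2$, $C(v,k,2)$ is the ordinary covering number: the minimum number of $k$-subsets of a $v$-set such that every $2$-subset is contained in at least one of them. *)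

theory Defs
  imports Main
begin

text \<open>Component i (for i < m) has ground set X_i = {..<v i}; the components are
  kept apart by indexing, which models pairwise disjoint X_1,...,X_m.
  Tuples of sets are functions nat => nat set, only the values at i < m matter.\<close>

definition gc_block :: "nat \<Rightarrow> (nat \<Rightarrow> nat) \<Rightarrow> (nat \<Rightarrow> nat) \<Rightarrow> (nat \<Rightarrow> nat set) \<Rightarrow> bool" where
  "gc_block m v k B \<longleftrightarrow> (\<forall>i<m. B i \<subseteq> {..<v i} \<and> card (B i) = k i)"

definition gc_admissible :: "nat \<Rightarrow> (nat \<Rightarrow> nat) \<Rightarrow> (nat \<Rightarrow> nat) \<Rightarrow> (nat \<Rightarrow> nat set) \<Rightarrow> bool" where
  "gc_admissible m v k T \<longleftrightarrow>
     (\<forall>i<m. T i \<subseteq> {..<v i} \<and> card (T i) \<le> k i) \<and> (\<Sum>i<m. card (T i)) = 2"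

definition gc_contained :: "nat \<Rightarrow> (nat \<Rightarrow> nat set) \<Rightarrow> (nat \<Rightarrow> nat set) \<Rightarrow> bool" where
  "gc_contained m T B \<longleftrightarrow> (\<forall>i<m. T i \<subseteq> B i)"

definition is_GC :: "nat \<Rightarrow> (nat \<Rightarrow> nat) \<Rightarrow> (nat \<Rightarrow> nat) \<Rightarrow> (nat \<Rightarrow> nat set) list \<Rightarrow> bool" where
  "is_GC m v k F \<longleftrightarrow> (\<forall>B\<in>set F. gc_block m v k B) \<and>
     (\<forall>T. gc_admissible m v k T \<longrightarrow> (\<exists>B\<in>set F. gc_contained m T B))"

definition GC_num :: "nat \<Rightarrow> (nat \<Rightarrow> nat) \<Rightarrow> (nat \<Rightarrow> nat) \<Rightarrow> nat" where
  "GC_num m v k = (LEAST n. \<exists>F. is_GC m v k F \<and> length F = n)"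

definition is_covering :: "nat \<Rightarrow> nat \<Rightarrow> nat set list \<Rightarrow> bool" where
  "is_covering v k F \<longleftrightarrow> (\<forall>B\<in>set F. B \<subseteq> {..<v} \<and> card B = k) \<and>
     (\<forall>P. P \<subseteq> {..<v} \<and> card P = 2 \<longrightarrow> (\<exists>B\<in>set F. P \<subseteq> B))"

definition cov_num :: "nat \<Rightarrow> nat \<Rightarrow> nat" where
  "cov_num v k = (LEAST n. \<exists>F. is_covering v k F \<and> length F = n)"

end

theory Submission
  imports Defs "HOL-Library.FuncSet"
begin

text \<open>Restricting a generalized covering to one component \<open>X\<^sub>i\<close> with \<open>k\<^sub>i \<ge> 2\<close> gives an
  ordinary covering of \<open>X\<^sub>i\<close> with the same number of blocks, because every pair inside \<open>X\<^sub>i\<close>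
  is an admissible tuple. The only other ingredient is that some generalized covering exists
  at all (take every block), so that \<open>C(\<^bold>v,\<^bold>k,2)\<close> is attained.\<close>

lemma cov_num_le_length:
  assumes "is_covering v k F"
  shows "cov_num v k \<le> length F"
  unfolding cov_num_def using assms by (intro Least_le) blast

lemma is_covering_component:
  assumes GC: "is_GC m v k F" and "i < m" and "2 \<le> k i"
  shows "is_covering (v i) (k i) (map (\<lambda>B. B i) F)"
  unfolding is_covering_def
proof (intro conjI allI impI)
  show "\<forall>C\<in>set (map (\<lambda>B. B i) F). C \<subseteq> {..<v i} \<and> card C = k i"
    using GC \<open>i < m\<close> by (auto simp: is_GC_def gc_block_def)
next
  fix P assume P: "P \<subseteq> {..<v i} \<and> card P = 2"
  define T where "T j = (if j = i then P else {})" for j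
  have "(\<Sum>j<m. card (T j)) = (\<Sum>j<m. if j = i then 2 else 0)"
    by (rule sum.cong) (auto simp: T_def P)
  also have "\<dots> = 2"
    using \<open>i < m\<close> by (simp add: sum.delta)
  finally have "gc_admissible m v k T"
    unfolding gc_admissible_def using P \<open>2 \<le> k i\<close> by (auto simp: T_def)
  then obtain B where "B \<in> set F" "gc_contained m T B"
    using GC by (auto simp: is_GC_def)
  then have "T i \<subseteq> B i"
    using \<open>i < m\<close> by (simp add: gc_contained_def)
  then have "P \<subseteq> B i"
    by (simp add: T_def)
  with \<open>B \<in> set F\<close> show "\<exists>C\<in>set (map (\<lambda>B. B i) F). P \<subseteq> C"
    by auto
qed

lemma admissible_contained_in_block:
  assumes "\<forall>i<m. k i \<le> v i" and "gc_admissible m v k T"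
  shows "\<exists>B \<in> (\<Pi>\<^sub>E i\<in>{..<m}. {C. C \<subseteq> {..<v i} \<and> card C = k i}). gc_contained m T B"
proof -
  have "\<forall>i\<in>{..<m}. \<exists>C. T i \<subseteq> C \<and> C \<subseteq> {..<v i} \<and> card C = k i"
    using assms by (auto intro!: exists_subset_between simp: gc_admissible_def)
  then obtain f where f: "\<forall>i\<in>{..<m}. T i \<subseteq> f i \<and> f i \<subseteq> {..<v i} \<and> card (f i) = k i"
    by (rule bchoice [elim_format]) blast
  then have "restrict f {..<m} \<in> (\<Pi>\<^sub>E i\<in>{..<m}. {C. C \<subseteq> {..<v i} \<and> card C = k i})"
    by auto
  moreover have "gc_contained m T (restrict f {..<m})"
    using f by (simp add: gc_contained_def)
  ultimately show ?thesis by blast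
qed

lemma is_GC_exists:
  assumes "\<forall>i<m. k i \<le> v i"
  shows "\<exists>F. is_GC m v k F"
proof -
  let ?blocks = "\<Pi>\<^sub>E i\<in>{..<m}. {C. C \<subseteq> {..<v i} \<and> card C = k i}"
  have "finite {C. C \<subseteq> {..<v i} \<and> card C = k i}" for i
    by (rule finite_subset [of _ "Pow {..<v i}"]) auto
  then have "finite ?blocks"
    by (simp add: finite_PiE)
  then have "\<exists>F. set F = ?blocks"
    by (rule finite_list)
  then obtain F where F: "set F = ?blocks" ..
  have "is_GC m v k F"
    unfolding is_GC_def F
  proof (intro conjI allI impI)
    show "\<forall>B\<in>?blocks. gc_block m v k B"
      unfolding gc_block_def by (blast dest: PiE_mem)
  next
    fix T assume "gc_admissible m v k T"
    then show "\<exists>B\<in>?blocks. gc_contained m T B"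
      by (rule admissible_contained_in_block [OF assms])
  qed
  then show ?thesis ..
qed

lemma GC_num_attained:
  assumes "\<forall>i<m. k i \<le> v i"
  obtains F where "is_GC m v k F" and "length F = GC_num m v k"
proof -
  have "\<exists>n F. is_GC m v k F \<and> length F = n"
    using is_GC_exists [OF assms] by blast
  then have "\<exists>F. is_GC m v k F \<and> length F = GC_num m v k"
    unfolding GC_num_def by (rule LeastI_ex)
  then show ?thesis using that by blast
qed

theorem corollary3p10:
  fixes m :: nat and v k :: "nat \<Rightarrow> nat"
  assumes "\<forall>i<m. 0 < k i \<and> k i \<le> v i"
    and "(\<Sum>i<m. k i) \<ge> 2"
  shows "\<forall>i<m. k i \<noteq> 1 \<longrightarrow> cov_num (v i) (k i) \<le> GC_num m v k"
proof (intro allI impI)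
  fix i assume "i < m" and "k i \<noteq> 1"
  with assms(1) have "2 \<le> k i" by fastforce
  obtain F where F: "is_GC m v k F" "length F = GC_num m v k"
    using GC_num_attained assms(1) by blast
  have "cov_num (v i) (k i) \<le> length (map (\<lambda>B. B i) F)"
    using is_covering_component [OF F(1) \<open>i < m\<close> \<open>2 \<le> k i\<close>] by (rule cov_num_le_length)
  then show "cov_num (v i) (k i) \<le> GC_num m v k"
    using F(2) by simp
qed

end
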